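(* Let $D$ be a divisible periodic subgroup of an abelian group $A$ and let $\varphi$ be an endomorphism of $A$. If $\varphi$ is inertial or left-inertial, then $\varphi(D)\subseteq D$ and $\varphi$ acts on $D$ as a multiplication.
   Context: Abelian groups are written additively. An endomorphism $\varphi$ of $A$ is inertial if $(\varphi(X)+X)/X$ is finite for every subgroup $X\le A$, and left-inertial if $X/(X\cap\varphi(X))$ is finite for every $X\le A$. On a periodic group, a multiplication is the componentwise action of an element of $\prod_p\mathbb{Z}_p$ ($p$-adic integers) on the $p$-components. *)

theory Defs
  imports Main "HOL-Number_Theory.Number_Theory" "HOL-Computational_Algebra.Computational_Algebra"
begin

text \<open>The abelian group A is the whole type 'a of class ab_group_add (written additively).\<close>

fun nsmul :: "nat \<Rightarrow> 'a::ab_group_add \<Rightarrow> 'a" where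
  "nsmul 0 x = 0"
| "nsmul (Suc n) x = x + nsmul n x"

definition zsmul :: "int \<Rightarrow> 'a::ab_group_add \<Rightarrow> 'a" where
  "zsmul k x = (if 0 \<le> k then nsmul (nat k) x else - nsmul (nat (- k)) x)"

definition subgrp :: "'a::ab_group_add set \<Rightarrow> bool" where
  "subgrp X \<longleftrightarrow> 0 \<in> X \<and> (\<forall>x\<in>X. \<forall>y\<in>X. x + y \<in> X) \<and> (\<forall>x\<in>X. - x \<in> X)"

definition endo :: "('a::ab_group_add \<Rightarrow> 'a) \<Rightarrow> bool" where
  "endo f \<longleftrightarrow> (\<forall>x y. f (x + y) = f x + f y)"

text \<open>For K a subgroup of H: H/K is finite, i.e. finitely many cosets of K meet H.\<close>
definition finite_quot :: "'a::ab_group_add set \<Rightarrow> 'a set \<Rightarrow> bool" where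
  "finite_quot H K \<longleftrightarrow> finite ((\<lambda>y. {y + k | k. k \<in> K}) ` H)"

definition inertial :: "('a::ab_group_add \<Rightarrow> 'a) \<Rightarrow> bool" where
  "inertial f \<longleftrightarrow> (\<forall>X. subgrp X \<longrightarrow> finite_quot {a + b | a b. a \<in> f ` X \<and> b \<in> X} X)"

definition left_inertial :: "('a::ab_group_add \<Rightarrow> 'a) \<Rightarrow> bool" where
  "left_inertial f \<longleftrightarrow> (\<forall>X. subgrp X \<longrightarrow> finite_quot X (X \<inter> f ` X))"

definition divisible :: "'a::ab_group_add set \<Rightarrow> bool" where
  "divisible D \<longleftrightarrow> (\<forall>d\<in>D. \<forall>n::nat. n > 0 \<longrightarrow> (\<exists>e\<in>D. nsmul n e = d))"

definition periodic :: "'a::ab_group_add set \<Rightarrow> bool" where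
  "periodic D \<longleftrightarrow> (\<forall>d\<in>D. \<exists>n::nat. n > 0 \<and> nsmul n d = 0)"

text \<open>A p-adic integer, represented as a coherent sequence: a k is a residue mod p^k
  and a (k+1) reduces to a k modulo p^k (inverse limit of the Z/p^k).\<close>
definition padic_int :: "nat \<Rightarrow> (nat \<Rightarrow> int) \<Rightarrow> bool" where
  "padic_int p a \<longleftrightarrow> (\<forall>k. [a (Suc k) = a k] (mod (int p ^ k)))"

text \<open>f acts on the periodic group D as the multiplication by the element (a p)_p of
  the product of the p-adic integers: on an element x with n x = 0 (n > 0), i.e.
  x in the sum of the p-components for p dividing n, the action is multiplication by
  the integer m with m = a p (v_p n) mod p^(v_p n) for all primes p dividing n
  (the action of the p-adic integers through Z/n = prod Z/p^(v_p n)).\<close>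
definition acts_as_multiplication :: "('a::ab_group_add \<Rightarrow> 'a) \<Rightarrow> 'a set \<Rightarrow> bool" where
  "acts_as_multiplication f D \<longleftrightarrow>
     (\<exists>a :: nat \<Rightarrow> nat \<Rightarrow> int. (\<forall>p. prime p \<longrightarrow> padic_int p (a p)) \<and>
        (\<forall>x\<in>D. \<forall>n::nat. n > 0 \<longrightarrow> nsmul n x = 0 \<longrightarrow>
           (\<exists>m::int. (\<forall>p. prime p \<and> p dvd n \<longrightarrow>
                         [m = a p (multiplicity p n)] (mod (int p ^ multiplicity p n)))
                     \<and> f x = zsmul m x)))"

end

theory Submission
  imports Defs
begin

text \<open>Every x in D lies in a locally cyclic divisible subgroup X of D, the union of a chain of
  finite cyclic groups. If \<phi> X + X is finite over X, resp. X over X \<inter> \<phi> X, some N > 0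
  maps the larger group into the smaller one, and X = N X gives \<phi> X \<subseteq> X, resp.
  X \<subseteq> \<phi> X. Either way x and \<phi> x lie in a common finite cyclic group in which every
  annihilator of x kills \<phi> x, so \<phi> x = t x; in particular \<phi> D \<subseteq> D.
  On the p-primary part, the integers c k by which \<phi> acts on a chain g k of a Pruefer
  subgroup (p g (k+1) = g k) are coherent modulo p^k, and \<phi> acts as c k on every element
  killed by p^k; the Chinese remainder theorem glues these p-adic actions together.\<close>

lemma nsmul_add_left: "nsmul (m + n) x = nsmul m x + nsmul n x"
  by (induction m) (auto simp: add.assoc)

lemma nsmul_add_right: "nsmul n (x + y) = nsmul n x + nsmul n y"
  by (induction n) (auto simp: algebra_simps)

lemma nsmul_mult: "nsmul (m * n) x = nsmul m (nsmul n x)"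
  by (induction m) (auto simp: nsmul_add_left)

lemma zsmul_of_nat: "zsmul (int n) x = nsmul n x"
  by (simp add: zsmul_def)

lemma zsmul_0_left [simp]: "zsmul 0 x = 0"
  by (simp add: zsmul_def)

lemma zsmul_1_left [simp]: "zsmul 1 x = x"
  by (simp add: zsmul_def)

lemma zsmul_add1_left: "zsmul (a + 1) x = zsmul a x + x"
proof (cases "0 \<le> a")
  case True
  then have "nat (a + 1) = Suc (nat a)" by simp
  with True show ?thesis by (simp add: zsmul_def add.commute)
next
  case False
  show ?thesis
  proof (cases "a = -1")
    case True then show ?thesis by (simp add: zsmul_def)
  next
    case not_minus_1: False
    with False have "nat (- a) = Suc (nat (- (a + 1)))" by simp
    with False not_minus_1 show ?thesis by (simp add: zsmul_def algebra_simps)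
  qed
qed

lemma zsmul_add_left: "zsmul (a + b) x = zsmul a x + zsmul b x"
proof (induction b rule: int_induct[where k = 0])
  case base then show ?case by simp
next
  case (step1 i) then show ?case
    by (metis add.assoc zsmul_add1_left)
next
  case (step2 i)
  have "zsmul (a + i) x = zsmul (a + (i - 1)) x + x"
    using zsmul_add1_left[of "a + (i - 1)" x] by simp
  moreover have "zsmul i x = zsmul (i - 1) x + x"
    using zsmul_add1_left[of "i - 1" x] by simp
  ultimately show ?case using step2 by (simp add: algebra_simps)
qed

lemma zsmul_minus_left: "zsmul (- a) x = - zsmul a x"
  using zsmul_add_left[of a "- a" x] by (simp add: eq_neg_iff_add_eq_0 add.commute)

lemma zsmul_diff_left: "zsmul (a - b) x = zsmul a x - zsmul b x"
  using zsmul_add_left[of a "- b" x] zsmul_minus_left[of b x] by simp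

lemma zsmul_mult: "zsmul (a * b) x = zsmul a (zsmul b x)"
proof (induction a rule: int_induct[where k = 0])
  case base then show ?case by simp
next
  case (step1 i) then show ?case
    by (simp add: distrib_right zsmul_add_left zsmul_add1_left)
next
  case (step2 i) then show ?case
    by (simp add: left_diff_distrib zsmul_diff_left)
qed

lemma zsmul_commute: "zsmul a (zsmul b x) = zsmul b (zsmul a x)"
  by (metis mult.commute zsmul_mult)

lemma zsmul_add_right: "zsmul a (x + y) = zsmul a x + zsmul a y"
  by (simp add: zsmul_def nsmul_add_right)

lemma zsmul_0_right [simp]: "zsmul a 0 = 0"
  using zsmul_add_right[of a 0 0] by simp

lemma zsmul_minus_right: "zsmul a (- x) = - zsmul a x"
  using zsmul_add_right[of a x "- x"] by (simp add: eq_neg_iff_add_eq_0 add.commute)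

lemma zsmul_diff_right: "zsmul a (x - y) = zsmul a x - zsmul a y"
  by (metis diff_conv_add_uminus zsmul_add_right zsmul_minus_right)

lemma zsmul_eq_0_if_dvd: "zsmul m x = 0 \<Longrightarrow> m dvd k \<Longrightarrow> zsmul k x = 0"
  by (metis dvd_def mult.commute zsmul_mult zsmul_0_right)

lemma zsmul_cong: "zsmul m x = 0 \<Longrightarrow> [a = b] (mod m) \<Longrightarrow> zsmul a x = zsmul b x"
  by (metis cong_iff_dvd_diff eq_iff_diff_eq_0 zsmul_diff_left zsmul_eq_0_if_dvd)

lemma endo_0: "endo f \<Longrightarrow> f 0 = 0"
  unfolding endo_def by (metis add_cancel_right_right)

lemma endo_add: "endo f \<Longrightarrow> f (x + y) = f x + f y"
  by (simp add: endo_def)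

lemma endo_minus: "endo f \<Longrightarrow> f (- x) = - f x"
  by (metis endo_0 endo_add eq_neg_iff_add_eq_0)

lemma endo_nsmul: "endo f \<Longrightarrow> f (nsmul n x) = nsmul n (f x)"
  by (induction n) (auto simp: endo_0 endo_add)

lemma endo_zsmul: "endo f \<Longrightarrow> f (zsmul a x) = zsmul a (f x)"
  by (simp add: zsmul_def endo_nsmul endo_minus)

lemma subgrp_0: "subgrp X \<Longrightarrow> 0 \<in> X"
  by (simp add: subgrp_def)

lemma subgrp_add: "subgrp X \<Longrightarrow> x \<in> X \<Longrightarrow> y \<in> X \<Longrightarrow> x + y \<in> X"
  by (simp add: subgrp_def)

lemma subgrp_diff: "subgrp X \<Longrightarrow> x \<in> X \<Longrightarrow> y \<in> X \<Longrightarrow> x - y \<in> X"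
  by (metis diff_conv_add_uminus subgrp_def)

lemma subgrp_nsmul: "subgrp X \<Longrightarrow> x \<in> X \<Longrightarrow> nsmul n x \<in> X"
  by (induction n) (auto simp: subgrp_def)

lemma subgrp_zsmul: "subgrp X \<Longrightarrow> x \<in> X \<Longrightarrow> zsmul a x \<in> X"
  by (auto simp: zsmul_def subgrp_nsmul subgrp_def)

lemma subgrp_image: "subgrp X \<Longrightarrow> endo f \<Longrightarrow> subgrp (f ` X)"
  unfolding subgrp_def
  by (auto simp: endo_0 intro!: image_eqI[of _ f] simp flip: endo_add endo_minus)

lemma subgrp_Int: "subgrp X \<Longrightarrow> subgrp Y \<Longrightarrow> subgrp (X \<inter> Y)"
  unfolding subgrp_def by auto

definition cyc :: "'a::ab_group_add \<Rightarrow> 'a set" where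
  "cyc g = range (\<lambda>t. zsmul t g)"

lemma zsmul_in_cyc: "zsmul t g \<in> cyc g"
  by (auto simp: cyc_def)

lemma cyc_self: "g \<in> cyc g"
  using zsmul_in_cyc[of 1 g] by simp

lemma zsmul_in_cycI: "a \<in> cyc g \<Longrightarrow> zsmul t a \<in> cyc g"
  by (auto simp: cyc_def simp flip: zsmul_mult)

lemma cyc_subset: "a \<in> cyc b \<Longrightarrow> cyc a \<subseteq> cyc b"
  by (auto simp: cyc_def simp flip: zsmul_mult)

lemma subgrp_cyc: "subgrp (cyc g)"
  unfolding subgrp_def cyc_def
  by (auto simp flip: zsmul_add_left zsmul_minus_left intro!: range_eqI[of _ _ 0])

lemma cyc_subset_subgrp: "subgrp X \<Longrightarrow> g \<in> X \<Longrightarrow> cyc g \<subseteq> X"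
  by (auto simp: cyc_def subgrp_zsmul)

lemma endo_image_cyc: "endo f \<Longrightarrow> a \<in> cyc g \<Longrightarrow> f a \<in> cyc (f g)"
  by (auto simp: cyc_def endo_zsmul)

definition has_order :: "'a::ab_group_add \<Rightarrow> int \<Rightarrow> bool" where
  "has_order g r \<longleftrightarrow> (\<forall>k. zsmul k g = 0 \<longleftrightarrow> r dvd k)"

lemma has_order_exists:
  assumes "nsmul n g = 0" "n > 0"
  shows "\<exists>r>0. has_order g (int r)"
proof -
  define r where "r = (LEAST n. n > 0 \<and> nsmul n g = 0)"
  have r: "r > 0" "nsmul r g = 0"
    unfolding r_def by (rule LeastI2[of _ n]; use assms in auto)+
  have "zsmul k g = 0 \<longleftrightarrow> int r dvd k" for k
  proof -
    have "zsmul k g = zsmul (k div int r) (zsmul (int r) g) + zsmul (k mod int r) g"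
      by (simp flip: zsmul_mult zsmul_add_left)
    then have reduce: "zsmul k g = zsmul (k mod int r) g"
      using r by (simp add: zsmul_of_nat)
    show ?thesis
    proof
      assume "zsmul k g = 0"
      then have "nsmul (nat (k mod int r)) g = 0"
        using reduce r(1) by (simp add: zsmul_def)
      moreover have "nat (k mod int r) < r"
        using r(1) by (simp add: nat_less_iff)
      ultimately have "nat (k mod int r) = 0"
        using not_less_Least[of "nat (k mod int r)" "\<lambda>n. n > 0 \<and> nsmul n g = 0"]
        unfolding r_def by auto
      moreover have "k mod int r \<ge> 0"
        using r(1) by simp
      ultimately show "int r dvd k"
        by (simp add: dvd_eq_mod_eq_0)
    qed (use reduce in simp)
  qed
  then show ?thesis
    using r(1) unfolding has_order_def by blast
qed

text \<open>With a = s g, b = t g and d = gcd s (ord g), the element (ord g / d) a vanishes, hence so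
  does (ord g / d) b, which forces d to divide t; Bezout then writes b as a multiple of a.\<close>

lemma mem_cyc_if_annihilator_subset:
  assumes "nsmul n g = 0" "n > 0" "a \<in> cyc g" "b \<in> cyc g"
    and ann: "\<And>k. zsmul k a = 0 \<Longrightarrow> zsmul k b = 0"
  shows "b \<in> cyc a"
proof -
  obtain r where "r > 0" and r: "has_order g (int r)"
    using has_order_exists[OF assms(1,2)] by blast
  obtain s t where a: "a = zsmul s g" and b: "b = zsmul t g"
    using assms(3,4) unfolding cyc_def by blast
  define d where "d = gcd s (int r)"
  define k where "k = int r div d"
  have rdk: "int r = d * k"
    unfolding k_def d_def by simp
  with \<open>r > 0\<close> have "k \<noteq> 0"
    by auto
  obtain s' where "s = d * s'"
    unfolding d_def by (meson dvd_def gcd_dvd1)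
  then have "zsmul k a = zsmul (int r * s') g"
    using a rdk by (simp flip: zsmul_mult add: ac_simps)
  then have "zsmul k a = 0"
    using r unfolding has_order_def by simp
  then have "zsmul (k * t) g = 0"
    using ann b by (simp add: zsmul_mult)
  then have "k * d dvd k * t"
    using r rdk unfolding has_order_def by (simp add: mult.commute)
  then obtain w where w: "t = d * w"
    using \<open>k \<noteq> 0\<close> by fastforce
  obtain u v where uv: "u * s + v * int r = d"
    using bezout_int[of s "int r"] d_def by blast
  have "b = zsmul ((u * w) * s + (v * w) * int r) g"
    using b w by (simp add: algebra_simps flip: uv)
  also have "\<dots> = zsmul (u * w) a + zsmul (v * w) (zsmul (int r) g)"
    using a by (simp add: zsmul_add_left zsmul_mult)
  also have "\<dots> = zsmul (u * w) a"
    using r unfolding has_order_def by (metis add_0_right dvd_refl zsmul_0_right)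
  finally show ?thesis
    by (metis zsmul_in_cyc)
qed

text \<open>With c cosets of K meeting H, two of the multiples 0, e, ..., c e of e lie in the same
  coset, so some m e with 1 \<le> m \<le> c lies in K; hence c! annihilates H modulo K.\<close>

lemma finite_quot_bounded_exponent:
  assumes "finite_quot H K" "subgrp K" "\<And>e i. e \<in> H \<Longrightarrow> nsmul i e \<in> H"
  shows "\<exists>N>0. \<forall>e\<in>H. nsmul N e \<in> K"
proof -
  define coset where "coset y = {y + k |k. k \<in> K}" for y
  define c where "c = card (coset ` H)"
  have "nsmul (fact c) e \<in> K" if "e \<in> H" for e
  proof -
    have "\<not> inj_on (\<lambda>i. coset (nsmul i e)) {0..c}"
    proof
      assume "inj_on (\<lambda>i. coset (nsmul i e)) {0..c}"
      moreover have "(\<lambda>i. coset (nsmul i e)) ` {0..c} \<subseteq> coset ` H"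
        using that assms(3) by auto
      moreover have "finite (coset ` H)"
        using assms(1) unfolding finite_quot_def coset_def .
      ultimately have "card {0..c} \<le> c"
        unfolding c_def by (rule card_inj_on_le)
      then show False
        by simp
    qed
    then obtain a b where "a \<le> c" "b \<le> c" "a \<noteq> b" "coset (nsmul a e) = coset (nsmul b e)"
      unfolding inj_on_def by auto
    then obtain i j where ij: "i < j" "j \<le> c" "coset (nsmul i e) = coset (nsmul j e)"
      by (metis linorder_neqE_nat)
    have "nsmul j e \<in> coset (nsmul i e)"
      using ij(3) subgrp_0[OF assms(2)] unfolding coset_def by force
    then obtain k where "k \<in> K" "nsmul j e = nsmul i e + k"
      unfolding coset_def by blast
    moreover have "nsmul j e = nsmul (j - i) e + nsmul i e"
      using ij nsmul_add_left[of "j - i" i e] by simp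
    ultimately have "nsmul (j - i) e \<in> K"
      by (simp add: add.commute)
    moreover have "j - i dvd fact c"
      using ij by (intro dvd_fact) auto
    then obtain q where "fact c = q * (j - i)"
      by (metis dvdE mult.commute)
    ultimately show ?thesis
      by (simp add: nsmul_mult subgrp_nsmul[OF assms(2)])
  qed
  then show ?thesis
    by (intro exI[of _ "fact c"]) auto
qed

definition locally_cyclic :: "'a::ab_group_add set \<Rightarrow> bool" where
  "locally_cyclic X \<longleftrightarrow> (\<forall>a\<in>X. \<forall>b\<in>X. \<exists>g\<in>X. a \<in> cyc g \<and> b \<in> cyc g)"

lemma subgrp_locally_cyclic_Union_cyc:
  fixes f :: "nat \<Rightarrow> 'a::ab_group_add"
  assumes mono: "\<And>i j. i \<le> j \<Longrightarrow> f i \<in> cyc (f j)"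
  shows "subgrp (\<Union>i. cyc (f i))" "locally_cyclic (\<Union>i. cyc (f i))"
proof -
  have common: "\<exists>j. a \<in> cyc (f j) \<and> b \<in> cyc (f j)" if "a \<in> cyc (f i)" "b \<in> cyc (f i')" for a b i i'
  proof
    have "cyc (f i) \<subseteq> cyc (f (max i i'))" "cyc (f i') \<subseteq> cyc (f (max i i'))"
      by (simp_all add: cyc_subset mono)
    with that show "a \<in> cyc (f (max i i')) \<and> b \<in> cyc (f (max i i'))"
      by blast
  qed
  show "subgrp (\<Union>i. cyc (f i))"
    unfolding subgrp_def
  proof (intro conjI ballI)
    show "0 \<in> (\<Union>i. cyc (f i))"
      using subgrp_0[OF subgrp_cyc] by blast
  next
    fix a b
    assume "a \<in> (\<Union>i. cyc (f i))" "b \<in> (\<Union>i. cyc (f i))"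
    then obtain j where "a \<in> cyc (f j)" "b \<in> cyc (f j)"
      using common by blast
    then show "a + b \<in> (\<Union>i. cyc (f i))"
      using subgrp_add[OF subgrp_cyc] by blast
  next
    fix a
    assume "a \<in> (\<Union>i. cyc (f i))"
    then obtain i where "a \<in> cyc (f i)"
      by blast
    then show "- a \<in> (\<Union>i. cyc (f i))"
      using subgrp_cyc[of "f i"] unfolding subgrp_def by blast
  qed
  show "locally_cyclic (\<Union>i. cyc (f i))"
    unfolding locally_cyclic_def
  proof (intro ballI)
    fix a b
    assume "a \<in> (\<Union>i. cyc (f i))" "b \<in> (\<Union>i. cyc (f i))"
    then obtain j where "a \<in> cyc (f j)" "b \<in> cyc (f j)"
      using common by blast
    then show "\<exists>g\<in>(\<Union>i. cyc (f i)). a \<in> cyc g \<and> b \<in> cyc g"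
      using cyc_self[of "f j"] by blast
  qed
qed

lemma factorial_chain_mono:
  assumes fs: "\<And>n. nsmul (fact (Suc n)) (f (Suc n)) = f n" and "i \<le> j"
  shows "f i \<in> cyc (f j)"
  using \<open>i \<le> j\<close>
proof (induction j rule: dec_induct)
  case base then show ?case by (rule cyc_self)
next
  case (step j)
  have "f j = zsmul (int (fact (Suc j))) (f (Suc j))"
    using fs[of j] by (simp only: zsmul_of_nat)
  then have "f j \<in> cyc (f (Suc j))"
    by (metis zsmul_in_cyc)
  then show ?case
    using step cyc_subset by blast
qed

text \<open>Divisibility holds because every n divides almost all of the factorials.\<close>

lemma divisible_Union_factorial_chain:
  assumes fs: "\<And>n. nsmul (fact (Suc n)) (f (Suc n)) = f n"
  shows "divisible (\<Union>i. cyc (f i))"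
  unfolding divisible_def
proof (intro ballI allI impI)
  fix z and n :: nat
  assume "z \<in> (\<Union>i. cyc (f i))" "n > 0"
  then obtain i t where z: "z = zsmul t (f i)"
    unfolding cyc_def by blast
  define j where "j = i + n"
  obtain s where s: "f i = zsmul s (f j)"
    using factorial_chain_mono[OF fs, of i j] unfolding j_def cyc_def by auto
  have "n dvd fact (Suc j)"
    using \<open>n > 0\<close> by (intro dvd_fact) (auto simp: j_def)
  then obtain q where q: "int (fact (Suc j)) = int n * int q"
    by (metis dvdE of_nat_mult)
  define w where "w = zsmul (t * s * int q) (f (Suc j))"
  have "nsmul n w = zsmul ((t * s) * int (fact (Suc j))) (f (Suc j))"
    unfolding w_def q by (simp add: ac_simps flip: zsmul_of_nat zsmul_mult)
  also have "\<dots> = z"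
    by (simp only: zsmul_mult zsmul_of_nat fs) (simp add: z s zsmul_mult)
  finally show "\<exists>w\<in>(\<Union>i. cyc (f i)). nsmul n w = z"
    unfolding w_def using zsmul_in_cyc by blast
qed

lemma locally_cyclic_divisible_hull:
  assumes "subgrp D" "divisible D" "x \<in> D"
  obtains X where "X \<subseteq> D" "x \<in> X" "subgrp X" "divisible X" "locally_cyclic X"
proof -
  have "\<exists>w\<in>D. nsmul (fact (Suc n)) w = y" if "y \<in> D" for y n
    using assms(2) that unfolding divisible_def by simp
  then have "\<exists>f. \<forall>n. (f n \<in> D \<and> (n = 0 \<longrightarrow> f n = x)) \<and> nsmul (fact (Suc n)) (f (Suc n)) = f n"
    using assms(3) by (intro dependent_nat_choice) auto
  then obtain f where f: "\<And>n. f n \<in> D" "f 0 = x"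
    and fs: "\<And>n. nsmul (fact (Suc n)) (f (Suc n)) = f n"
    by blast
  note chain = subgrp_locally_cyclic_Union_cyc[OF factorial_chain_mono[OF fs]]
  show ?thesis
  proof (rule that)
    show "(\<Union>i. cyc (f i)) \<subseteq> D"
      using cyc_subset_subgrp[OF assms(1) f(1)] by blast
    show "x \<in> (\<Union>i. cyc (f i))"
      using cyc_self f(2) by blast
  qed (simp_all only: chain divisible_Union_factorial_chain[OF fs])
qed

lemma inertial_image_divisible_subset:
  assumes "inertial \<phi>" "endo \<phi>" "subgrp X" "divisible X"
  shows "\<phi> ` X \<subseteq> X"
proof
  define H where "H = {a + b | a b. a \<in> \<phi> ` X \<and> b \<in> X}"
  have fin: "finite_quot H X"
    using assms(1,3) unfolding inertial_def H_def by blast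
  have closed: "nsmul i h \<in> H" if "h \<in> H" for h i
  proof -
    from that obtain a b where "a \<in> X" "b \<in> X" "h = \<phi> a + b"
      unfolding H_def by blast
    then have "nsmul i h = \<phi> (nsmul i a) + nsmul i b"
      by (simp add: nsmul_add_right endo_nsmul[OF assms(2)])
    then show ?thesis
      unfolding H_def using subgrp_nsmul[OF assms(3)] \<open>a \<in> X\<close> \<open>b \<in> X\<close> by blast
  qed
  obtain N where "N > 0" and N: "\<And>h. h \<in> H \<Longrightarrow> nsmul N h \<in> X"
    using finite_quot_bounded_exponent[OF fin assms(3) closed] by blast
  fix y
  assume "y \<in> \<phi> ` X"
  then obtain x where "x \<in> X" "y = \<phi> x"
    by blast
  then obtain w where "w \<in> X" "x = nsmul N w"
    using assms(4) \<open>N > 0\<close> unfolding divisible_def by metis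
  moreover have "\<phi> w + 0 \<in> H"
    unfolding H_def using \<open>w \<in> X\<close> subgrp_0[OF assms(3)] by blast
  ultimately show "y \<in> X"
    using N[of "\<phi> w + 0"] \<open>y = \<phi> x\<close> by (simp add: endo_nsmul[OF assms(2)])
qed

lemma left_inertial_divisible_subset_image:
  assumes "left_inertial \<phi>" "endo \<phi>" "subgrp X" "divisible X"
  shows "X \<subseteq> \<phi> ` X"
proof
  have sub: "subgrp (X \<inter> \<phi> ` X)"
    using subgrp_Int[OF assms(3) subgrp_image[OF assms(3,2)]] .
  have fin: "finite_quot X (X \<inter> \<phi> ` X)"
    using assms(1,3) unfolding left_inertial_def by blast
  obtain N where "N > 0" and N: "\<And>h. h \<in> X \<Longrightarrow> nsmul N h \<in> X \<inter> \<phi> ` X"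
    using finite_quot_bounded_exponent[OF fin sub subgrp_nsmul[OF assms(3)]] by blast
  fix x
  assume "x \<in> X"
  then obtain w where "w \<in> X" "nsmul N w = x"
    using assms(4) \<open>N > 0\<close> unfolding divisible_def by blast
  then show "x \<in> \<phi> ` X"
    using N by blast
qed

definition power_endo_on :: "('a::ab_group_add \<Rightarrow> 'a) \<Rightarrow> 'a set \<Rightarrow> bool" where
  "power_endo_on \<phi> D \<longleftrightarrow> (\<forall>x\<in>D. \<phi> x \<in> cyc x)"

text \<open>Inside a locally cyclic divisible hull of x, the element \<phi> x (inertial case), resp.
  x = \<phi> z (left-inertial case), lies in a common finite cyclic group with x.\<close>

lemma power_endo_on_divisible_periodic:
  assumes "subgrp D" "divisible D" "periodic D" "endo \<phi>"
    and "inertial \<phi> \<or> left_inertial \<phi>"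
  shows "power_endo_on \<phi> D"
  unfolding power_endo_on_def
proof
  fix x
  assume "x \<in> D"
  obtain X where X: "X \<subseteq> D" "x \<in> X" "subgrp X" "divisible X" "locally_cyclic X"
    using locally_cyclic_divisible_hull[OF assms(1,2) \<open>x \<in> D\<close>] .
  have ann: "zsmul k (\<phi> x) = 0" if "zsmul k x = 0" for k
    using that by (simp flip: endo_zsmul[OF assms(4)] add: endo_0[OF assms(4)])
  have torsion: "\<exists>n>0. nsmul n g = 0" if "g \<in> X" for g
    using assms(3) that X(1) unfolding periodic_def by blast
  from assms(5) show "\<phi> x \<in> cyc x"
  proof
    assume "inertial \<phi>"
    then have "\<phi> x \<in> X"
      using inertial_image_divisible_subset[OF _ assms(4) X(3,4)] X(2) by blast
    then obtain g where "g \<in> X" "x \<in> cyc g" "\<phi> x \<in> cyc g"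
      using X(2,5) unfolding locally_cyclic_def by blast
    moreover obtain n where "n > 0" "nsmul n g = 0"
      using torsion[OF \<open>g \<in> X\<close>] by blast
    ultimately show ?thesis
      using mem_cyc_if_annihilator_subset[of n g x "\<phi> x"] ann by blast
  next
    assume "left_inertial \<phi>"
    then obtain z where "z \<in> X" "x = \<phi> z"
      using left_inertial_divisible_subset_image[OF _ assms(4) X(3,4)] X(2) by blast
    then obtain g where "g \<in> X" "z \<in> cyc g" "x \<in> cyc g"
      using X(2,5) unfolding locally_cyclic_def by blast
    then have "x \<in> cyc (\<phi> g)" "\<phi> x \<in> cyc (\<phi> g)"
      using endo_image_cyc[OF assms(4)] \<open>x = \<phi> z\<close> by auto
    moreover obtain n where "n > 0" "nsmul n g = 0"
      using torsion[OF \<open>g \<in> X\<close>] by blast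
    then have "nsmul n (\<phi> g) = 0"
      using endo_nsmul[OF assms(4)] endo_0[OF assms(4)] by metis
    ultimately show ?thesis
      using mem_cyc_if_annihilator_subset[of n "\<phi> g" x "\<phi> x"] \<open>n > 0\<close> ann by blast
  qed
qed

lemma power_endo_onD:
  assumes "power_endo_on \<phi> D" "y \<in> D"
  obtains b where "\<phi> y = zsmul b y"
  using assms unfolding power_endo_on_def cyc_def by blast

lemma endo_eq_zsmul_on_cyc:
  assumes "endo \<phi>" "\<phi> g = zsmul c g" "h \<in> cyc g"
  shows "\<phi> h = zsmul c h"
  using assms by (auto simp: cyc_def endo_zsmul zsmul_commute)

lemma has_order_prime:
  assumes "prime p" "y \<noteq> 0" "zsmul (int p) y = 0"
  shows "has_order y (int p)"
proof -
  obtain r where "r > 0" and r: "has_order y (int r)"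
    using has_order_exists[of p y] assms prime_gt_0_nat by (auto simp: zsmul_of_nat)
  then have "r dvd p"
    using assms(3) unfolding has_order_def by (metis int_dvd_int_iff)
  moreover have "r \<noteq> 1"
    using r assms(2) unfolding has_order_def by (metis of_nat_1 one_dvd zsmul_1_left)
  ultimately have "r = p"
    using assms(1) unfolding prime_nat_iff by blast
  with r show ?thesis
    by simp
qed

lemma has_order_prufer_chain:
  assumes p: "prime p" and f0: "has_order (f 0) (int p)"
    and fs: "\<And>n. zsmul (int p) (f (Suc n)) = f n"
  shows "has_order (f k) (int p ^ Suc k)"
proof (induction k)
  case 0
  then show ?case
    using f0 by simp
next
  case (Suc k)
  have "zsmul t (f (Suc k)) = 0 \<longleftrightarrow> int p ^ Suc (Suc k) dvd t" for t
  proof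
    assume z: "zsmul t (f (Suc k)) = 0"
    then have "zsmul t (f k) = 0"
      by (metis fs zsmul_commute zsmul_0_right)
    then obtain s where s: "t = int p ^ Suc k * s"
      using Suc.IH unfolding has_order_def by blast
    have "zsmul (int p ^ k * s) (f k) = zsmul t (f (Suc k))"
      unfolding s fs[of k, symmetric] by (simp flip: zsmul_mult add: ac_simps)
    then have "zsmul (int p ^ k * s) (f k) = 0"
      using z by simp
    then have "int p ^ k * int p dvd int p ^ k * s"
      using Suc.IH unfolding has_order_def by (simp add: ac_simps)
    then have "int p dvd s"
      using p by (simp add: prime_gt_0_nat)
    then show "int p ^ Suc (Suc k) dvd t"
      using s by (simp add: mult_dvd_mono)
  next
    assume "int p ^ Suc (Suc k) dvd t"
    then obtain s where "t = int p ^ Suc k * s * int p"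
      by (metis dvdE mult.commute mult.left_commute power_Suc)
    then have "zsmul t (f (Suc k)) = zsmul (int p ^ Suc k * s) (f k)"
      by (simp only: zsmul_mult fs)
    then show "zsmul t (f (Suc k)) = 0"
      using Suc.IH unfolding has_order_def by simp
  qed
  then show ?case
    unfolding has_order_def by blast
qed

lemma padic_int_of_prufer_chain:
  assumes "endo \<phi>" and ord: "\<And>k. has_order (f k) (int p ^ Suc k)"
    and fs: "\<And>n. zsmul (int p) (f (Suc n)) = f n"
    and c: "\<And>k. \<phi> (f k) = zsmul (c k) (f k)"
  shows "padic_int p c"
  unfolding padic_int_def
proof
  fix k
  have "zsmul (c k) (f k) = \<phi> (zsmul (int p) (f (Suc k)))"
    using c fs by simp
  also have "\<dots> = zsmul (int p) (zsmul (c (Suc k)) (f (Suc k)))"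
    using c by (simp add: endo_zsmul[OF assms(1)])
  also have "\<dots> = zsmul (c (Suc k)) (f k)"
    using fs by (metis zsmul_commute)
  finally have "zsmul (c (Suc k) - c k) (f k) = 0"
    by (simp add: zsmul_diff_left)
  then have "int p ^ k * int p dvd c (Suc k) - c k"
    using ord unfolding has_order_def by (simp add: ac_simps)
  then show "[c (Suc k) = c k] (mod int p ^ k)"
    by (simp add: cong_iff_dvd_diff dvd_mult_left)
qed

text \<open>The gcd of m and p^(j+1) is some p^r with r \<le> j, and it is an integral combination of
  m and p^(j+1).\<close>

lemma p_power_multiple_in_cyc:
  assumes p: "prime p" and y: "zsmul (int p ^ Suc j) y = 0"
    and "zsmul m y \<in> cyc g" "zsmul m y \<noteq> 0"
  shows "zsmul (int p ^ j) y \<in> cyc g"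
proof -
  define G where "G = gcd m (int p ^ Suc j)"
  have "nat G dvd p ^ Suc j"
    unfolding G_def by (metis gcd_dvd2 gcd_ge_0_int int_dvd_int_iff nat_0_le of_nat_power)
  then obtain r where "r \<le> Suc j" "nat G = p ^ r"
    using divides_primepow_nat[OF p] by blast
  then have Gr: "G = int p ^ r"
    unfolding G_def by (metis gcd_ge_0_int int_nat_eq of_nat_power)
  have "r \<noteq> Suc j"
    using assms(4) zsmul_eq_0_if_dvd[OF y] Gr unfolding G_def by (metis gcd_dvd1)
  with \<open>r \<le> Suc j\<close> have "r \<le> j"
    by simp
  obtain u v where "u * m + v * int p ^ Suc j = int p ^ r"
    using bezout_int[of m "int p ^ Suc j"] Gr unfolding G_def by metis
  then have "zsmul (int p ^ r) y = zsmul u (zsmul m y) + zsmul v (zsmul (int p ^ Suc j) y)"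
    by (metis zsmul_add_left zsmul_mult)
  then have "zsmul (int p ^ r) y \<in> cyc g"
    using y assms(3) zsmul_in_cycI by simp
  then have "zsmul (int p ^ (j - r)) (zsmul (int p ^ r) y) \<in> cyc g"
    by (rule zsmul_in_cycI)
  then show ?thesis
    using \<open>r \<le> j\<close> by (simp flip: zsmul_mult power_add)
qed

lemma p_torsion_in_cyc_divisible:
  assumes p: "prime p" and g: "has_order g (int p ^ K)"
    and "z \<in> cyc g" "zsmul (int p) z = 0" "j < K"
  shows "\<exists>h\<in>cyc g. zsmul (int p ^ j) h = z"
proof -
  obtain t where t: "z = zsmul t g"
    using assms(3) unfolding cyc_def by blast
  obtain K' where K': "K = Suc K'"
    using assms(5) by (cases K) auto
  have "zsmul (int p * t) g = 0"
    using assms(4) t by (simp add: zsmul_mult)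
  then have "int p * int p ^ K' dvd int p * t"
    using g K' unfolding has_order_def by simp
  then obtain s where s: "t = int p ^ K' * s"
    using p by (auto simp: prime_gt_0_nat)
  define h where "h = zsmul (s * int p ^ (K' - j)) g"
  have "int p ^ j * (s * int p ^ (K' - j)) = t"
    using assms(5) K' s by (simp add: ac_simps flip: power_add)
  then have "zsmul (int p ^ j) h = z"
    unfolding h_def t by (simp flip: zsmul_mult)
  then show ?thesis
    unfolding h_def using zsmul_in_cyc by blast
qed

text \<open>If p^j y lies outside the group generated by g, then comparing \<phi> y = b y,
  \<phi> (y + g) = d (y + g) and \<phi> g = c g gives (b - d) y = (d - c) g, which forces both sides
  to vanish; hence d \<equiv> c modulo the order of g and so b y = d y = c y.\<close>

lemma power_endo_eq_zsmul_off_cyc: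
  assumes D: "subgrp D" and e: "endo \<phi>" and pw: "power_endo_on \<phi> D" and p: "prime p"
    and g: "g \<in> D" "has_order g (int p ^ K)" "\<phi> g = zsmul c g"
    and y: "y \<in> D" "zsmul (int p ^ Suc j) y = 0" "zsmul (int p ^ j) y \<notin> cyc g"
    and "Suc j \<le> K"
  shows "\<phi> y = zsmul c y"
proof -
  obtain b where b: "\<phi> y = zsmul b y"
    using power_endo_onD[OF pw y(1)] .
  obtain d where d: "\<phi> (y + g) = zsmul d (y + g)"
    using power_endo_onD[OF pw subgrp_add[OF D y(1) g(1)]] .
  have eq: "zsmul (b - d) y = zsmul (d - c) g"
    using d b g(3) by (simp add: endo_add[OF e] zsmul_add_right zsmul_diff_left algebra_simps)
  have "zsmul (b - d) y = 0"
  proof (rule ccontr)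
    assume "zsmul (b - d) y \<noteq> 0"
    moreover have "zsmul (b - d) y \<in> cyc g"
      using eq zsmul_in_cyc by simp
    ultimately have "zsmul (int p ^ j) y \<in> cyc g"
      using p_power_multiple_in_cyc[OF p y(2)] by blast
    with y(3) show False ..
  qed
  moreover have "int p ^ K dvd d - c"
    using eq calculation g(2) unfolding has_order_def by simp
  then have "int p ^ Suc j dvd d - c"
    using le_imp_power_dvd[OF \<open>Suc j \<le> K\<close>] dvd_trans by blast
  then have "zsmul (d - c) y = 0"
    by (rule zsmul_eq_0_if_dvd[OF y(2)])
  moreover have "zsmul c y = zsmul b y - zsmul (b - d) y - zsmul (d - c) y"
    by (simp add: zsmul_diff_left)
  ultimately show ?thesis
    using b by simp
qed

lemma power_endo_eq_zsmul_on_p_torsion: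
  assumes D: "subgrp D" and e: "endo \<phi>" and pw: "power_endo_on \<phi> D" and p: "prime p"
    and g: "g \<in> D" "has_order g (int p ^ K)" "\<phi> g = zsmul c g"
  shows "j \<le> K \<Longrightarrow> y \<in> D \<Longrightarrow> zsmul (int p ^ j) y = 0 \<Longrightarrow> \<phi> y = zsmul c y"
proof (induction j arbitrary: y)
  case 0
  then show ?case
    using endo_0[OF e] by simp
next
  case (Suc j)
  show ?case
  proof (cases "zsmul (int p ^ j) y \<in> cyc g")
    case True
    have "zsmul (int p) (zsmul (int p ^ j) y) = 0"
      using Suc.prems(3) by (simp flip: zsmul_mult)
    moreover have "j < K"
      using Suc.prems(1) by simp
    ultimately obtain h where h: "h \<in> cyc g" "zsmul (int p ^ j) h = zsmul (int p ^ j) y"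
      using p_torsion_in_cyc_divisible[OF p g(2) True] by blast
    have "y - h \<in> D"
      using subgrp_diff[OF D Suc.prems(2)] cyc_subset_subgrp[OF D g(1)] h(1) by blast
    moreover have "zsmul (int p ^ j) (y - h) = 0"
      using h(2) by (simp add: zsmul_diff_right)
    ultimately have "\<phi> (y - h) = zsmul c (y - h)"
      using Suc.IH Suc.prems(1) by simp
    moreover have "\<phi> h = zsmul c h"
      using endo_eq_zsmul_on_cyc[OF e g(3) h(1)] .
    moreover have "\<phi> y = \<phi> (y - h) + \<phi> h"
      using endo_add[OF e, of "y - h" h] by simp
    ultimately show ?thesis
      by (simp add: zsmul_diff_right)
  next
    case False
    show ?thesis
      using power_endo_eq_zsmul_off_cyc[OF D e pw p g Suc.prems(2,3) False Suc.prems(1)] .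
  qed
qed

lemma p_torsion_trivial:
  assumes "subgrp D" "\<And>y. y \<in> D \<Longrightarrow> zsmul (int p) y = 0 \<Longrightarrow> y = 0"
  shows "y \<in> D \<Longrightarrow> zsmul (int p ^ k) y = 0 \<Longrightarrow> y = 0"
proof (induction k arbitrary: y)
  case (Suc k)
  have "zsmul (int p) (zsmul (int p ^ k) y) = 0"
    using Suc.prems(2) by (simp flip: zsmul_mult)
  then have "zsmul (int p ^ k) y = 0"
    using assms subgrp_zsmul Suc.prems(1) by blast
  then show ?case
    using Suc.IH Suc.prems(1) by blast
qed simp

lemma prufer_chain_exists:
  assumes "divisible D" "prime p" "y \<in> D"
  obtains f where "\<And>n. f n \<in> D" "f 0 = y" "\<And>n. zsmul (int p) (f (Suc n)) = f n"
proof -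
  have "\<exists>w\<in>D. zsmul (int p) w = z" if "z \<in> D" for z
    using assms(1,2) that prime_gt_0_nat unfolding divisible_def by (simp add: zsmul_of_nat)
  then have "\<exists>f. \<forall>n. (f n \<in> D \<and> (n = 0 \<longrightarrow> f n = y)) \<and> zsmul (int p) (f (Suc n)) = f n"
    using assms(3) by (intro dependent_nat_choice) auto
  then show ?thesis
    using that by blast
qed

text \<open>If D has elements of order p, the integers by which \<phi> acts on a chain of generators of a
  Pruefer subgroup work for the whole p-primary part.\<close>

lemma power_endo_p_adic:
  assumes D: "subgrp D" "divisible D" and e: "endo \<phi>" and pw: "power_endo_on \<phi> D"
    and p: "prime p"
  shows "\<exists>\<alpha>. padic_int p \<alpha> \<and> (\<forall>k y. y \<in> D \<longrightarrow> zsmul (int p ^ k) y = 0 \<longrightarrow> \<phi> y = zsmul (\<alpha> k) y)"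
proof (cases "\<exists>y\<in>D. y \<noteq> 0 \<and> zsmul (int p) y = 0")
  case True
  then obtain y where "y \<in> D" "y \<noteq> 0" "zsmul (int p) y = 0"
    by blast
  then obtain f where f: "\<And>n. f n \<in> D" "f 0 = y" and fs: "\<And>n. zsmul (int p) (f (Suc n)) = f n"
    using prufer_chain_exists[OF D(2) p] by blast
  have "has_order (f 0) (int p)"
    using has_order_prime[OF p \<open>y \<noteq> 0\<close> \<open>zsmul (int p) y = 0\<close>] f(2) by simp
  then have ord: "has_order (f k) (int p ^ Suc k)" for k
    using has_order_prufer_chain[where f = f, OF p _ fs] by blast
  have "\<forall>k. \<exists>b. \<phi> (f k) = zsmul b (f k)"
    using pw f(1) unfolding power_endo_on_def cyc_def by blast
  from choice[OF this] obtain c where c: "\<And>k. \<phi> (f k) = zsmul (c k) (f k)"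
    by blast
  have "\<phi> y' = zsmul (c k) y'" if "y' \<in> D" "zsmul (int p ^ k) y' = 0" for k y'
    using power_endo_eq_zsmul_on_p_torsion[OF D(1) e pw p f(1) ord c, where j = k] that by simp
  then show ?thesis
    using padic_int_of_prufer_chain[where f = f, OF e ord fs c] by blast
next
  case False
  then have "\<phi> y = zsmul 0 y" if "y \<in> D" "zsmul (int p ^ k) y = 0" for k y
    using p_torsion_trivial[OF D(1), of p y k] that endo_0[OF e] by auto
  moreover have "padic_int p (\<lambda>_. 0)"
    unfolding padic_int_def by simp
  ultimately show ?thesis
    by blast
qed

lemma zsmul_coprime_decompose:
  assumes "coprime m n" "zsmul (m * n) x = 0"
  obtains x1 x2 where "x = x1 + x2" "x1 \<in> cyc x" "x2 \<in> cyc x"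
    "zsmul m x1 = 0" "zsmul n x2 = 0"
proof -
  obtain u v where uv: "u * m + v * n = 1"
    using bezout_int[of m n] assms(1) by (metis coprime_imp_gcd_eq_1)
  show ?thesis
  proof (rule that)
    show "x = zsmul (v * n) x + zsmul (u * m) x"
      using uv by (simp add: add.commute flip: zsmul_add_left)
    have "zsmul (w * (m * n)) x = 0" for w
      using assms(2) by (simp add: zsmul_mult)
    from this[of v] this[of u]
    show "zsmul m (zsmul (v * n) x) = 0" "zsmul n (zsmul (u * m) x) = 0"
      by (simp_all flip: zsmul_mult add: ac_simps)
  qed (rule zsmul_in_cyc)+
qed

lemma endo_zsmul_chinese_remainder:
  assumes "endo \<phi>" "coprime m n" "x = x1 + x2" "zsmul m x1 = 0" "zsmul n x2 = 0"
    "\<phi> x1 = zsmul a x1" "\<phi> x2 = zsmul b x2"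
  obtains c where "[c = a] (mod m)" "[c = b] (mod n)" "\<phi> x = zsmul c x"
proof -
  obtain c where c: "[c = a] (mod m)" "[c = b] (mod n)"
    using binary_chinese_remainder_int[OF assms(2)] by blast
  have "\<phi> x = zsmul c x1 + zsmul c x2"
    using assms(3,6,7) endo_add[OF assms(1)] zsmul_cong[OF assms(4) c(1)] zsmul_cong[OF assms(5) c(2)]
    by simp
  then show ?thesis
    using that c assms(3) by (simp add: zsmul_add_right)
qed

lemma multiplicity_mult_coprime_prime_power:
  assumes "prime p" "prime q" "q \<noteq> p" "n \<noteq> 0"
  shows "multiplicity q (p ^ k * n) = multiplicity q (n :: nat)"
  using assms
  by (simp add: prime_elem_multiplicity_mult_distrib prime_elem_multiplicity_power_distrib
      prime_multiplicity_other)

lemma prime_power_cofactor_split: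
  fixes n :: nat
  assumes "n > 1"
  obtains p n' where "prime p" "n = p ^ multiplicity p n * n'" "\<not> p dvd n'" "0 < n'" "n' < n"
proof -
  obtain p where p: "prime p" "p dvd n"
    using prime_factor_nat[of n] assms by auto
  define k where "k = multiplicity p n"
  have "n \<noteq> 0" "\<not> is_unit p"
    using assms p(1) not_prime_1 by auto
  then obtain n' where n': "n = p ^ k * n'" "\<not> p dvd n'"
    unfolding k_def by (rule multiplicity_decompose')
  have "n' > 0"
    using n'(1) assms by (cases "n' = 0") auto
  have "k > 0"
    using assms p by (auto simp: k_def prime_multiplicity_gt_zero_iff)
  then have "p ^ k > 1"
    using p(1) prime_gt_1_nat one_less_power by blast
  with \<open>n' > 0\<close> have "n' < n"
    unfolding n'(1) by simp
  with p(1) n' \<open>n' > 0\<close> show ?thesis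
    unfolding k_def by (rule that)
qed

text \<open>Induction on n: split off the full power of one prime p dividing n and glue the
  actions on the two coprime parts by the Chinese remainder theorem.\<close>

lemma endo_acts_as_multiplication_on_torsion:
  fixes a :: "nat \<Rightarrow> nat \<Rightarrow> int"
  assumes D: "subgrp D" and e: "endo \<phi>"
    and A: "\<And>p k y. prime p \<Longrightarrow> y \<in> D \<Longrightarrow> zsmul (int p ^ k) y = 0 \<Longrightarrow> \<phi> y = zsmul (a p k) y"
  shows "0 < n \<Longrightarrow> x \<in> D \<Longrightarrow> zsmul (int n) x = 0 \<Longrightarrow>
    \<exists>m. (\<forall>q. prime q \<and> q dvd n \<longrightarrow> [m = a q (multiplicity q n)] (mod int q ^ multiplicity q n))
        \<and> \<phi> x = zsmul m x"
proof (induction n arbitrary: x rule: less_induct)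
  case (less n)
  show ?case
  proof (cases "n = 1")
    case True
    then show ?thesis
      using less.prems endo_0[OF e] by (intro exI[of _ 0]) simp
  next
    case False
    with less.prems(1) have "n > 1"
      by simp
    then obtain p n' where p: "prime p" and
      n': "n = p ^ multiplicity p n * n'" "\<not> p dvd n'" "0 < n'" "n' < n"
      by (rule prime_power_cofactor_split)
    define k where "k = multiplicity p n"
    have n_eq: "n = p ^ k * n'"
      using n'(1) by (simp only: k_def)
    have cop: "coprime (int p ^ k) (int n')"
      using prime_imp_coprime[OF p n'(2)] by simp
    have "zsmul (int p ^ k * int n') x = 0"
      using less.prems(3) n_eq by (metis of_nat_mult of_nat_power)
    then obtain x1 x2 where x: "x = x1 + x2" "x1 \<in> cyc x" "x2 \<in> cyc x"
      "zsmul (int p ^ k) x1 = 0" "zsmul (int n') x2 = 0"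
      by (rule zsmul_coprime_decompose[OF cop])
    have "x1 \<in> D" "x2 \<in> D"
      using x(2,3) cyc_subset_subgrp[OF D less.prems(2)] by auto
    obtain m2 where m2: "\<forall>q. prime q \<and> q dvd n' \<longrightarrow>
        [m2 = a q (multiplicity q n')] (mod int q ^ multiplicity q n')" "\<phi> x2 = zsmul m2 x2"
      using less.IH[OF n'(4,3) \<open>x2 \<in> D\<close> x(5)] by blast
    obtain m where m: "[m = a p k] (mod int p ^ k)" "[m = m2] (mod int n')" "\<phi> x = zsmul m x"
      using endo_zsmul_chinese_remainder[OF e cop x(1,4,5) A[OF p \<open>x1 \<in> D\<close> x(4)] m2(2)] .
    have "[m = a q (multiplicity q n)] (mod int q ^ multiplicity q n)" if q: "prime q" "q dvd n" for q
    proof (cases "q = p")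
      case True
      then show ?thesis
        using m(1) k_def by simp
    next
      case False
      then have "q dvd n'"
        using q n_eq p by (metis prime_dvd_mult_iff prime_dvd_power primes_dvd_imp_eq)
      have mult: "multiplicity q n = multiplicity q n'"
        using multiplicity_mult_coprime_prime_power[OF p q(1) False] n'(3) n_eq by simp
      have "int q ^ multiplicity q n' dvd int n'"
        by (metis multiplicity_dvd of_nat_dvd_iff of_nat_power)
      then have "[m = m2] (mod int q ^ multiplicity q n')"
        using m(2) cong_dvd_modulus by blast
      then show ?thesis
        using m2(1) q(1) \<open>q dvd n'\<close> mult cong_trans by metis
    qed
    then show ?thesis
      using m(3) by blast
  qed
qed

theorem lemma3p4:
  fixes D :: "'a::ab_group_add set" and \<phi> :: "'a \<Rightarrow> 'a"
  assumes "subgrp D" and "divisible D" and "periodic D"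
    and "endo \<phi>"
    and "inertial \<phi> \<or> left_inertial \<phi>"
  shows "\<phi> ` D \<subseteq> D \<and> acts_as_multiplication \<phi> D"
proof
  have pw: "power_endo_on \<phi> D"
    using power_endo_on_divisible_periodic[OF assms] .
  then show "\<phi> ` D \<subseteq> D"
    using cyc_subset_subgrp[OF assms(1)] unfolding power_endo_on_def by blast
  have "\<forall>p. \<exists>\<alpha>. prime p \<longrightarrow> padic_int p \<alpha> \<and>
      (\<forall>k y. y \<in> D \<longrightarrow> zsmul (int p ^ k) y = 0 \<longrightarrow> \<phi> y = zsmul (\<alpha> k) y)"
    using power_endo_p_adic[OF assms(1,2,4) pw] by blast
  from choice[OF this] obtain a where
    a: "\<And>p. prime p \<Longrightarrow> padic_int p (a p)" and
    A: "\<And>p k y. prime p \<Longrightarrow> y \<in> D \<Longrightarrow> zsmul (int p ^ k) y = 0 \<Longrightarrow> \<phi> y = zsmul (a p k) y"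
    by blast
  show "acts_as_multiplication \<phi> D"
    unfolding acts_as_multiplication_def
  proof (intro exI[of _ a] conjI allI impI ballI)
    fix x n
    assume "x \<in> D" "0 < n" "nsmul n x = 0"
    then show "\<exists>m. (\<forall>p. prime p \<and> p dvd n \<longrightarrow> [m = a p (multiplicity p n)] (mod int p ^ multiplicity p n))
        \<and> \<phi> x = zsmul m x"
      using endo_acts_as_multiplication_on_torsion[OF assms(1,4) A] by (simp add: zsmul_of_nat)
  qed (use a in blast)
qed

end
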